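(* For all integers $k\ge 1$ and $t\ge 1$, $$B_0(k,2t-1)+B_1(k+1,2t)=B_0(k,2t-2k-1)+p_{de}(2t-k-1).$$
   Context: For a partition $\pi$, $s(\pi)$ is its smallest part. For $j\ge1$, $\mathrm{Spt}j_{do}(n)$ is the set of partitions $\pi$ of $n$ in which $s(\pi)$ occurs exactly $j$ times and the remaining parts (those larger than $s(\pi)$) are pairwise distinct and each has parity different from that of $s(\pi)$. $B_0(j,n)$ (resp. $B_1(j,n)$) is the number of $\pi\in\mathrm{Spt}j_{do}(n)$ whose number of parts greater than $s(\pi)$ is even (resp. odd); $B_0(j,n)=B_1(j,n)=0$ for $n\le 0$. $p_{de}(n)$ is the number of partitions of $n$ into distinct even parts, with $p_{de}(0)=1$ and $p_{de}(n)=0$ for $n<0$. *)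

theory Defs
  imports Main "HOL-Library.Multiset"
begin

definition partitions :: "nat \<Rightarrow> nat multiset set" where
  "partitions n = {M. (\<forall>x\<in>#M. 0 < x) \<and> sum_mset M = n}"

definition spart :: "nat multiset \<Rightarrow> nat" where
  "spart M = Min (set_mset M)"

definition Spt_do :: "nat \<Rightarrow> nat \<Rightarrow> nat multiset set" where
  "Spt_do j n = {M \<in> partitions n. M \<noteq> {#} \<and> count M (spart M) = j \<and>
      (\<forall>x\<in>#M. spart M < x \<longrightarrow> count M x = 1 \<and> odd x \<noteq> odd (spart M))}"

definition nlarge :: "nat multiset \<Rightarrow> nat" where
  "nlarge M = size (filter_mset (\<lambda>x. spart M < x) M)"

definition B0 :: "nat \<Rightarrow> int \<Rightarrow> nat" where
  "B0 j n = (if n \<le> 0 then 0 else card {M \<in> Spt_do j (nat n). even (nlarge M)})"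

definition B1 :: "nat \<Rightarrow> int \<Rightarrow> nat" where
  "B1 j n = (if n \<le> 0 then 0 else card {M \<in> Spt_do j (nat n). odd (nlarge M)})"

text \<open>Partitions into distinct even parts; p_de(0) = 1 (empty partition), 0 for n < 0.\<close>
definition pde :: "int \<Rightarrow> nat" where
  "pde n = (if n < 0 then 0 else
     card {M \<in> partitions (nat n). \<forall>x\<in>#M. even x \<and> count M x = 1})"

end

theory Submission
  imports Defs
begin

(* A partition in Spt j_do(n) is determined by its smallest part s and the set D of its larger
   parts, subject to j s + sum D = n; the sign statistic is the parity of |D|.
   For s > 2, the map (s, D) |-> (s + 2, D) sends a pair counted by B0(k, 2t-2k-1) to one counted
   by B0(k, 2t-1) when s + 1 is not in D; when s + 1 is in D, (s, D) |-> (s + 2, D - {s + 1})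
   yields one counted by B1(k+1, 2t) instead, since (k+1)(s+2) = k s + (s+1) + 2k + 1.
   These maps are bijective onto the pairs on the left with s > 2.  On the left, s = 2 is
   impossible for parity reasons (then sum D and |D| have the same parity), and s = 1 leaves a set D
   of distinct even parts summing to 2t-k-1, with |D| even in B0 and odd in B1; together these
   are counted by p_de(2t-k-1). *)

(* (s, D) stands for the partition with j parts equal to s and the larger parts D; the size is an
   integer so that, as for B0, B1 and pde, a nonpositive size leaves nothing to count. *)
definition spt_pairs :: "nat \<Rightarrow> int \<Rightarrow> (nat \<times> nat set) set" where
  "spt_pairs j n =
     {(s, D). 0 < s \<and> finite D \<and> (\<forall>x\<in>D. s < x \<and> odd x \<noteq> odd s) \<and> int (j * s + \<Sum>D) = n}"

definition spt_of_pair :: "nat \<Rightarrow> nat \<times> nat set \<Rightarrow> nat multiset" where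
  "spt_of_pair j = (\<lambda>(s, D). replicate_mset j s + mset_set D)"

definition distinct_even_partitions :: "int \<Rightarrow> nat set set" where
  "distinct_even_partitions n = {D. finite D \<and> (\<forall>x\<in>D. even x \<and> 0 < x) \<and> int (\<Sum>D) = n}"

lemma mem_spt_pairs:
  "(s, D) \<in> spt_pairs j n \<longleftrightarrow>
     0 < s \<and> finite D \<and> (\<forall>x\<in>D. s < x \<and> odd x \<noteq> odd s) \<and> 0 \<le> n \<and> j * s + \<Sum>D = nat n"
  unfolding spt_pairs_def mem_Collect_eq case_prod_conv int_eq_iff by blast

lemma mem_distinct_even_partitions:
  "D \<in> distinct_even_partitions n \<longleftrightarrow>
     finite D \<and> (\<forall>x\<in>D. even x \<and> 0 < x) \<and> 0 \<le> n \<and> \<Sum>D = nat n"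
  unfolding distinct_even_partitions_def mem_Collect_eq int_eq_iff by blast

lemma sum_mset_mset_set: "sum_mset (mset_set A) = \<Sum>A"
  by (simp add: sum_unfold_sum_mset)

lemma mset_set_set_mset_if_count_one:
  assumes "\<forall>x\<in>#M. count M x = 1"
  shows "mset_set (set_mset M) = M"
proof (rule multiset_eqI)
  fix x
  show "count (mset_set (set_mset M)) x = count M x"
    using assms by (cases "x \<in># M") (auto simp: count_eq_zero_iff)
qed

lemma finite_sets_sum_le: "finite {D :: nat set. finite D \<and> \<Sum>D \<le> m}"
proof (rule finite_subset)
  show "{D. finite D \<and> \<Sum>D \<le> m} \<subseteq> Pow {..m}"
    by (auto intro: order_trans[OF member_le_sum])
qed simp

lemma finite_spt_pairs:
  assumes "0 < j"
  shows "finite (spt_pairs j n)"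
proof (rule finite_subset)
  show "spt_pairs j n \<subseteq> {..nat n} \<times> {D. finite D \<and> \<Sum>D \<le> nat n}"
  proof safe
    fix s D assume "(s, D) \<in> spt_pairs j n"
    then have "finite D" "j * s + \<Sum>D = nat n"
      unfolding mem_spt_pairs by auto
    moreover have "s \<le> j * s" using assms by simp
    ultimately show "s \<le> nat n" "finite D" "\<Sum>D \<le> nat n"
      by linarith+
  qed
qed (use finite_sets_sum_le in blast)

lemma spt_pairs_nonpos:
  assumes "0 < j" "n \<le> 0"
  shows "spt_pairs j n = {}"
proof -
  have "int (j * s + \<Sum>D) \<noteq> n" if "0 < s" for s and D :: "nat set"
  proof -
    have "0 < j * s + \<Sum>D" using assms(1) that by simp
    then have "0 < int (j * s + \<Sum>D)" by (simp only: of_nat_0_less_iff)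
    then show ?thesis using assms(2) by linarith
  qed
  then show ?thesis unfolding spt_pairs_def by blast
qed

lemma finite_distinct_even_partitions: "finite (distinct_even_partitions n)"
  by (rule finite_subset[OF _ finite_sets_sum_le[of "nat n"]])
    (auto simp: mem_distinct_even_partitions)

lemma
  assumes "0 < j" "finite D" "\<forall>x\<in>D. s < x"
  shows set_mset_spt_of_pair: "set_mset (spt_of_pair j (s, D)) = insert s D"
    and spart_spt_of_pair: "spart (spt_of_pair j (s, D)) = s"
    and count_spt_of_pair:
      "count (spt_of_pair j (s, D)) x = (if x = s then j else if x \<in> D then 1 else 0)"
    and nlarge_spt_of_pair: "nlarge (spt_of_pair j (s, D)) = card D"
    and sum_mset_spt_of_pair: "sum_mset (spt_of_pair j (s, D)) = j * s + \<Sum>D"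
proof -
  show set: "set_mset (spt_of_pair j (s, D)) = insert s D"
    using assms unfolding spt_of_pair_def by auto
  show spart: "spart (spt_of_pair j (s, D)) = s"
    unfolding spart_def set using assms by (intro Min_eqI) auto
  show "count (spt_of_pair j (s, D)) x = (if x = s then j else if x \<in> D then 1 else 0)"
    using assms unfolding spt_of_pair_def by (auto simp: count_mset_set')
  have "filter_mset (\<lambda>x. s < x) (replicate_mset j s) = {#}"
    by (induction j) auto
  moreover have "{x \<in> D. s < x} = D"
    using assms by auto
  ultimately have "filter_mset (\<lambda>x. s < x) (spt_of_pair j (s, D)) = mset_set D"
    using assms unfolding spt_of_pair_def by simp
  then show "nlarge (spt_of_pair j (s, D)) = card D"
    unfolding nlarge_def spart by simp
  show "sum_mset (spt_of_pair j (s, D)) = j * s + \<Sum>D"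
    unfolding spt_of_pair_def by (simp add: sum_mset_mset_set)
qed

lemma spt_of_pair_in_Spt_do:
  assumes "0 < j" "(s, D) \<in> spt_pairs j (int n)"
  shows "spt_of_pair j (s, D) \<in> Spt_do j n"
proof -
  have p: "0 < s" "finite D" "\<forall>x\<in>D. s < x \<and> odd x \<noteq> odd s" "j * s + \<Sum>D = n"
    using assms(2) unfolding mem_spt_pairs by auto
  then have "\<forall>x\<in>D. s < x" by auto
  note props = set_mset_spt_of_pair[OF assms(1) p(2) this] spart_spt_of_pair[OF assms(1) p(2) this]
    count_spt_of_pair[OF assms(1) p(2) this] sum_mset_spt_of_pair[OF assms(1) p(2) this]
  show ?thesis
    unfolding Spt_do_def partitions_def using props p by auto
qed

lemma Spt_do_as_spt_of_pair:
  assumes "M \<in> Spt_do j n"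
  defines "s \<equiv> spart M" and "D \<equiv> set_mset M - {spart M}"
  shows "(s, D) \<in> spt_pairs j (int n)" and "spt_of_pair j (s, D) = M"
proof -
  have ne: "M \<noteq> {#}" and cs: "count M s = j" and pos: "\<forall>x\<in>#M. 0 < x" and sum: "sum_mset M = n"
    and large: "\<forall>x\<in>#M. s < x \<longrightarrow> count M x = 1 \<and> odd x \<noteq> odd s"
    using assms(1) unfolding Spt_do_def partitions_def s_def by auto
  have "s \<in># M" unfolding s_def spart_def using ne by (intro Min_in) auto
  moreover have smin: "s \<le> x" if "x \<in># M" for x
    unfolding s_def spart_def using that by (intro Min_le) auto
  ultimately have D: "D = {x \<in> set_mset M. s < x}" and "0 < s" and "0 < j"
    unfolding D_def s_def[symmetric] using pos cs by force+
  have D_gt: "\<forall>x\<in>D. s < x" and "finite D" unfolding D by auto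
  show M: "spt_of_pair j (s, D) = M"
  proof (rule multiset_eqI)
    fix x
    show "count (spt_of_pair j (s, D)) x = count M x"
      unfolding count_spt_of_pair[OF \<open>0 < j\<close> \<open>finite D\<close> D_gt]
      using D cs large smin[of x] by (auto simp: count_eq_zero_iff)
  qed
  have "j * s + \<Sum>D = n"
    using sum unfolding M[symmetric] sum_mset_spt_of_pair[OF \<open>0 < j\<close> \<open>finite D\<close> D_gt] .
  then show "(s, D) \<in> spt_pairs j (int n)"
    unfolding mem_spt_pairs using \<open>0 < s\<close> \<open>finite D\<close> D large by auto
qed

lemma bij_betw_spt_of_pair:
  assumes "0 < j"
  shows "bij_betw (spt_of_pair j) (spt_pairs j (int n)) (Spt_do j n)"
proof (rule bij_betw_byWitness[where f' = "\<lambda>M. (spart M, set_mset M - {spart M})"])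
  show "\<forall>p\<in>spt_pairs j (int n).
      (spart (spt_of_pair j p), set_mset (spt_of_pair j p) - {spart (spt_of_pair j p)}) = p"
    using assms by (auto simp: mem_spt_pairs set_mset_spt_of_pair spart_spt_of_pair)
  show "spt_of_pair j ` spt_pairs j (int n) \<subseteq> Spt_do j n"
    using assms spt_of_pair_in_Spt_do by auto
qed (use Spt_do_as_spt_of_pair in auto)

lemma card_Spt_do_nlarge:
  assumes "0 < j"
  shows "card {M \<in> Spt_do j n. P (nlarge M)} = card {p \<in> spt_pairs j (int n). P (card (snd p))}"
proof -
  have "nlarge (spt_of_pair j p) = card (snd p)" if "p \<in> spt_pairs j (int n)" for p
    using that assms by (cases p) (auto simp: mem_spt_pairs nlarge_spt_of_pair)
  then have "bij_betw (spt_of_pair j)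
      {p \<in> spt_pairs j (int n). P (card (snd p))} {M \<in> Spt_do j n. P (nlarge M)}"
    by (intro bij_betw_Collect[OF bij_betw_spt_of_pair[OF assms]]) auto
  then show ?thesis by (simp add: bij_betw_same_card)
qed

lemma B0_eq_card_spt_pairs:
  assumes "0 < j"
  shows "B0 j n = card {p \<in> spt_pairs j n. even (card (snd p))}"
  using card_Spt_do_nlarge[OF assms, where P = even and n = "nat n"] spt_pairs_nonpos[OF assms]
  unfolding B0_def by auto

lemma B1_eq_card_spt_pairs:
  assumes "0 < j"
  shows "B1 j n = card {p \<in> spt_pairs j n. odd (card (snd p))}"
  using card_Spt_do_nlarge[OF assms, where P = odd and n = "nat n"] spt_pairs_nonpos[OF assms]
  unfolding B1_def by auto

lemma pde_eq_card_distinct_even_partitions: "pde n = card (distinct_even_partitions n)"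
proof (cases "n < 0")
  case True
  then have "distinct_even_partitions n = {}"
    by (auto simp: mem_distinct_even_partitions)
  then show ?thesis using True unfolding pde_def by simp
next
  case False
  have "bij_betw mset_set (distinct_even_partitions n)
          {M \<in> partitions (nat n). \<forall>x\<in>#M. even x \<and> count M x = 1}"
  proof (rule bij_betw_byWitness[where f' = set_mset])
    show "mset_set ` distinct_even_partitions n
        \<subseteq> {M \<in> partitions (nat n). \<forall>x\<in>#M. even x \<and> count M x = 1}"
      using False by (auto simp: mem_distinct_even_partitions partitions_def sum_mset_mset_set)
    show "set_mset ` {M \<in> partitions (nat n). \<forall>x\<in>#M. even x \<and> count M x = 1}
        \<subseteq> distinct_even_partitions n"
    proof clarify
      fix M assume M: "M \<in> partitions (nat n)" "\<forall>x\<in>#M. even x \<and> count M x = 1"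
      then have "\<Sum>(set_mset M) = nat n"
        using mset_set_set_mset_if_count_one[of M] sum_mset_mset_set[of "set_mset M"]
        unfolding partitions_def by auto
      then show "set_mset M \<in> distinct_even_partitions n"
        using False M unfolding mem_distinct_even_partitions partitions_def by auto
    qed
  qed (auto simp: mem_distinct_even_partitions mset_set_set_mset_if_count_one)
  then show ?thesis using False unfolding pde_def by (simp add: bij_betw_same_card)
qed

lemma card_Collect_split:
  assumes "finite A"
  shows "card {x \<in> A. P x} = card {x \<in> A. Q x \<and> P x} + card {x \<in> A. \<not> Q x \<and> P x}"
proof -
  have "{x \<in> A. P x} = {x \<in> A. Q x \<and> P x} \<union> {x \<in> A. \<not> Q x \<and> P x}" by auto
  moreover have "card ({x \<in> A. Q x \<and> P x} \<union> {x \<in> A. \<not> Q x \<and> P x}) =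
      card {x \<in> A. Q x \<and> P x} + card {x \<in> A. \<not> Q x \<and> P x}"
    by (rule card_Un_disjoint) (use assms in auto)
  ultimately show ?thesis by simp
qed

lemma card_spt_pairs_smallest_one:
  "card {p \<in> spt_pairs j n. fst p = 1 \<and> P (card (snd p))} =
     card {D \<in> distinct_even_partitions (n - int j). P (card D)}"
proof -
  have iff: "(1, D) \<in> spt_pairs j n \<longleftrightarrow> D \<in> distinct_even_partitions (n - int j)" for D
  proof -
    have "1 < x \<and> even x \<longleftrightarrow> even x \<and> 0 < x" for x :: nat
      by presburger
    moreover have "int (j * 1 + \<Sum>D) = n \<longleftrightarrow> int (\<Sum>D) = n - int j"
      by linarith
    ultimately show ?thesis
      unfolding spt_pairs_def distinct_even_partitions_def mem_Collect_eq case_prod_conv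
      by auto
  qed
  have "{p \<in> spt_pairs j n. fst p = 1 \<and> P (card (snd p))} =
      Pair 1 ` {D \<in> distinct_even_partitions (n - int j). P (card D)}"
  proof (intro equalityI subsetI)
    fix p assume "p \<in> {p \<in> spt_pairs j n. fst p = 1 \<and> P (card (snd p))}"
    then have "p \<in> spt_pairs j n" "p = (1, snd p)" "P (card (snd p))"
      by (simp_all add: prod_eq_iff)
    then show "p \<in> Pair 1 ` {D \<in> distinct_even_partitions (n - int j). P (card D)}"
      using iff[of "snd p"] by (metis (mono_tags, lifting) image_eqI mem_Collect_eq)
  next
    fix p :: "nat \<times> nat set"
    assume "p \<in> Pair 1 ` {D \<in> distinct_even_partitions (n - int j). P (card D)}"
    then obtain D where "p = (1, D)" "D \<in> distinct_even_partitions (n - int j)" "P (card D)"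
      by blast
    then show "p \<in> {p \<in> spt_pairs j n. fst p = 1 \<and> P (card (snd p))}"
      using iff[of D] by simp
  qed
  then show ?thesis by (simp add: card_image inj_on_def)
qed

lemma odd_iff_odd_card_if_smallest_two:
  assumes "p \<in> spt_pairs j n" "fst p = 2"
  shows "odd n \<longleftrightarrow> odd (card (snd p))"
proof -
  obtain D where p: "p = (2, D)" using assms(2) by (cases p) simp
  have D: "finite D" "\<forall>x\<in>D. odd x" and n: "n = int (j * 2 + \<Sum>D)"
    using assms(1) unfolding p spt_pairs_def by auto
  then have "{x \<in> D. odd x} = D" by auto
  then have "even (\<Sum>D) \<longleftrightarrow> even (card D)"
    using even_sum_iff[OF D(1), of "\<lambda>x. x"] by simp
  then show ?thesis unfolding p n even_of_nat_iff by simp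
qed

lemma card_spt_pairs_by_smallest:
  assumes "0 < j"
  shows "card {p \<in> spt_pairs j n. P p} =
    card {p \<in> spt_pairs j n. fst p = 1 \<and> P p} + card {p \<in> spt_pairs j n. fst p = 2 \<and> P p} +
    card {p \<in> spt_pairs j n. 2 < fst p \<and> P p}"
proof -
  have fin: "finite (spt_pairs j n)" using finite_spt_pairs[OF assms] .
  have pos: "0 < fst p" if "p \<in> spt_pairs j n" for p
    using that unfolding spt_pairs_def by auto
  have "{p \<in> spt_pairs j n. fst p \<noteq> 2 \<and> fst p \<noteq> 1 \<and> P p} =
      {p \<in> spt_pairs j n. 2 < fst p \<and> P p}"
    using pos by fastforce
  moreover have "{p \<in> spt_pairs j n. fst p = 2 \<and> fst p \<noteq> 1 \<and> P p} =
      {p \<in> spt_pairs j n. fst p = 2 \<and> P p}"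
    by auto
  ultimately show ?thesis
    using card_Collect_split[OF fin, where P = P and Q = "\<lambda>p. fst p = 1"]
      card_Collect_split[OF fin, where P = "\<lambda>p. fst p \<noteq> 1 \<and> P p" and Q = "\<lambda>p. fst p = 2"]
    by simp
qed

lemma card_spt_pairs_without_smallest_two:
  assumes "0 < j" and "\<And>c. P c \<Longrightarrow> odd n \<longleftrightarrow> even c"
  shows "card {p \<in> spt_pairs j n. P (card (snd p))} =
    card {p \<in> spt_pairs j n. fst p = 1 \<and> P (card (snd p))} +
    card {p \<in> spt_pairs j n. 2 < fst p \<and> P (card (snd p))}"
proof -
  have no_two: "{p \<in> spt_pairs j n. fst p = 2 \<and> P (card (snd p))} = {}"
  proof (rule equals0I)
    fix p assume "p \<in> {p \<in> spt_pairs j n. fst p = 2 \<and> P (card (snd p))}"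
    then show False
      using odd_iff_odd_card_if_smallest_two[of p j n] assms(2)[of "card (snd p)"] by simp
  qed
  show ?thesis
    unfolding card_spt_pairs_by_smallest[OF assms(1), where P = "\<lambda>p. P (card (snd p))"] no_two
    by simp
qed

lemma pde_eq_card_spt_pairs_smallest_one:
  "card {p \<in> spt_pairs j n. fst p = 1 \<and> even (card (snd p))} +
   card {p \<in> spt_pairs (j + 1) (n + 1). fst p = 1 \<and> odd (card (snd p))} = pde (n - int j)"
proof -
  let ?E = "distinct_even_partitions (n - int j)"
  have arg: "n + 1 - int (j + 1) = n - int j" by simp
  have "card ?E = card {D \<in> ?E. even (card D)} + card {D \<in> ?E. odd (card D)}"
    using card_Collect_split[OF finite_distinct_even_partitions,
        where P = "\<lambda>_. True" and Q = "\<lambda>D. even (card D)"]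
    by simp
  then show ?thesis
    unfolding card_spt_pairs_smallest_one[where P = even] card_spt_pairs_smallest_one[where P = odd]
      pde_eq_card_distinct_even_partitions arg ..
qed

lemma ball_larger_opposite_parity_shift:
  fixes s :: nat
  shows "(\<forall>x\<in>D. s + 2 < x \<and> odd x \<noteq> odd (s + 2)) \<longleftrightarrow>
    (\<forall>x\<in>D. s < x \<and> odd x \<noteq> odd s) \<and> s + 1 \<notin> D"
proof -
  have "s + 2 < x \<longleftrightarrow> s < x \<and> x \<noteq> s + 1" if "odd x \<noteq> odd s" for x :: nat
    using that by presburger
  then show ?thesis by auto
qed

lemma mem_spt_pairs_shift:
  assumes "0 < s"
  shows "(s + 2, D) \<in> spt_pairs j (n + 2 * int j) \<longleftrightarrow> (s, D) \<in> spt_pairs j n \<and> s + 1 \<notin> D"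
proof -
  have "int (j * (s + 2) + \<Sum>D) = n + 2 * int j \<longleftrightarrow> int (j * s + \<Sum>D) = n"
    by (simp add: algebra_simps)
  then show ?thesis
    unfolding spt_pairs_def mem_Collect_eq case_prod_conv ball_larger_opposite_parity_shift
    using assms by auto
qed

lemma mem_spt_pairs_shift_remove:
  assumes "0 < s" "s + 1 \<notin> D"
  shows "(s + 2, D) \<in> spt_pairs (j + 1) (n + 2 * int j + 1) \<longleftrightarrow>
    (s, insert (s + 1) D) \<in> spt_pairs j n"
proof (cases "finite D")
  case True
  then have "int ((j + 1) * (s + 2) + \<Sum>D) = n + 2 * int j + 1 \<longleftrightarrow>
      int (j * s + \<Sum>(insert (s + 1) D)) = n"
    using assms(2) by (simp add: algebra_simps)
  moreover have "s < s + 1 \<and> odd (s + 1) \<noteq> odd s" by simp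
  ultimately show ?thesis
    unfolding spt_pairs_def mem_Collect_eq case_prod_conv ball_larger_opposite_parity_shift
      finite_insert ball_simps(7)
    using assms by auto
qed (simp add: spt_pairs_def)

lemma bij_betw_spt_pairs_shift:
  "bij_betw (\<lambda>(s, D). (s + 2, D))
     {p \<in> spt_pairs j n. fst p + 1 \<notin> snd p} {p \<in> spt_pairs j (n + 2 * int j). 2 < fst p}"
proof (rule bij_betw_byWitness[where f' = "\<lambda>(s, D). (s - 2, D)"])
  show "(\<lambda>(s, D). (s + 2, D)) ` {p \<in> spt_pairs j n. fst p + 1 \<notin> snd p}
      \<subseteq> {p \<in> spt_pairs j (n + 2 * int j). 2 < fst p}"
  proof (rule image_subsetI)
    fix p assume "p \<in> {p \<in> spt_pairs j n. fst p + 1 \<notin> snd p}"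
    then obtain s D where "p = (s, D)" "(s, D) \<in> spt_pairs j n" "s + 1 \<notin> D" "0 < s"
      by (cases p) (auto simp: mem_spt_pairs)
    then show "(\<lambda>(s, D). (s + 2, D)) p \<in> {p \<in> spt_pairs j (n + 2 * int j). 2 < fst p}"
      using mem_spt_pairs_shift[of s D j n] by simp
  qed
  show "(\<lambda>(s, D). (s - 2, D)) ` {p \<in> spt_pairs j (n + 2 * int j). 2 < fst p}
      \<subseteq> {p \<in> spt_pairs j n. fst p + 1 \<notin> snd p}"
  proof (rule image_subsetI)
    fix p assume "p \<in> {p \<in> spt_pairs j (n + 2 * int j). 2 < fst p}"
    then obtain s D where "p = (s + 2, D)" "(s + 2, D) \<in> spt_pairs j (n + 2 * int j)" "0 < s"
      by (cases p) (auto dest!: less_imp_Suc_add)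
    then show "(\<lambda>(s, D). (s - 2, D)) p \<in> {p \<in> spt_pairs j n. fst p + 1 \<notin> snd p}"
      using mem_spt_pairs_shift[of s D j n] by simp
  qed
qed auto

lemma bij_betw_spt_pairs_shift_remove:
  "bij_betw (\<lambda>(s, D). (s + 2, D - {s + 1}))
     {p \<in> spt_pairs j n. fst p + 1 \<in> snd p} {p \<in> spt_pairs (j + 1) (n + 2 * int j + 1). 2 < fst p}"
proof (rule bij_betw_byWitness[where f' = "\<lambda>(s, D). (s - 2, insert (s - 1) D)"])
  show "(\<lambda>(s, D). (s + 2, D - {s + 1})) ` {p \<in> spt_pairs j n. fst p + 1 \<in> snd p}
      \<subseteq> {p \<in> spt_pairs (j + 1) (n + 2 * int j + 1). 2 < fst p}"
  proof (rule image_subsetI)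
    fix p assume "p \<in> {p \<in> spt_pairs j n. fst p + 1 \<in> snd p}"
    then obtain s D where "p = (s, D)" "(s, D) \<in> spt_pairs j n" "s + 1 \<in> D" "0 < s"
      by (cases p) (auto simp: mem_spt_pairs)
    then show "(\<lambda>(s, D). (s + 2, D - {s + 1})) p
        \<in> {p \<in> spt_pairs (j + 1) (n + 2 * int j + 1). 2 < fst p}"
      using mem_spt_pairs_shift_remove[of s "D - {s + 1}" j n] by (simp add: insert_absorb)
  qed
  show "(\<lambda>(s, D). (s - 2, insert (s - 1) D)) `
      {p \<in> spt_pairs (j + 1) (n + 2 * int j + 1). 2 < fst p} \<subseteq> {p \<in> spt_pairs j n. fst p + 1 \<in> snd p}"
  proof (rule image_subsetI)
    fix p assume "p \<in> {p \<in> spt_pairs (j + 1) (n + 2 * int j + 1). 2 < fst p}"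
    then obtain s D where "p = (s + 2, D)" "0 < s"
      and sD: "(s + 2, D) \<in> spt_pairs (j + 1) (n + 2 * int j + 1)"
      by (cases p) (auto dest!: less_imp_Suc_add)
    moreover have "s + 1 \<notin> D"
      using sD by (auto simp: mem_spt_pairs)
    ultimately show "(\<lambda>(s, D). (s - 2, insert (s - 1) D)) p
        \<in> {p \<in> spt_pairs j n. fst p + 1 \<in> snd p}"
      using mem_spt_pairs_shift_remove[of s D j n] by simp
  qed
qed (auto simp: mem_spt_pairs)

lemma card_spt_pairs_shift:
  assumes "0 < j"
  shows "card {p \<in> spt_pairs j n. P (card (snd p))} =
    card {p \<in> spt_pairs j (n + 2 * int j). 2 < fst p \<and> P (card (snd p))} +
    card {p \<in> spt_pairs (j + 1) (n + 2 * int j + 1). 2 < fst p \<and> P (Suc (card (snd p)))}"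
proof -
  have "bij_betw (\<lambda>(s, D). (s + 2, D))
      {p \<in> {p \<in> spt_pairs j n. fst p + 1 \<notin> snd p}. P (card (snd p))}
      {p \<in> {p \<in> spt_pairs j (n + 2 * int j). 2 < fst p}. P (card (snd p))}"
    by (rule bij_betw_Collect[OF bij_betw_spt_pairs_shift]) auto
  moreover have "bij_betw (\<lambda>(s, D). (s + 2, D - {s + 1}))
      {p \<in> {p \<in> spt_pairs j n. fst p + 1 \<in> snd p}. P (card (snd p))}
      {p \<in> {p \<in> spt_pairs (j + 1) (n + 2 * int j + 1). 2 < fst p}. P (Suc (card (snd p)))}"
  proof (rule bij_betw_Collect[OF bij_betw_spt_pairs_shift_remove])
    fix p assume "p \<in> {p \<in> spt_pairs j n. fst p + 1 \<in> snd p}"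
    then have "Suc (card (snd p - {fst p + 1})) = card (snd p)"
      by (intro card_Suc_Diff1) (auto simp: spt_pairs_def)
    then show "P (Suc (card (snd ((\<lambda>(s, D). (s + 2, D - {s + 1})) p)))) \<longleftrightarrow> P (card (snd p))"
      by (simp add: case_prod_beta)
  qed
  ultimately have "card {p \<in> spt_pairs j n. fst p + 1 \<notin> snd p \<and> P (card (snd p))} =
      card {p \<in> spt_pairs j (n + 2 * int j). 2 < fst p \<and> P (card (snd p))}"
    and "card {p \<in> spt_pairs j n. fst p + 1 \<in> snd p \<and> P (card (snd p))} =
      card {p \<in> spt_pairs (j + 1) (n + 2 * int j + 1). 2 < fst p \<and> P (Suc (card (snd p)))}"
    by (auto dest!: bij_betw_same_card)
  then show ?thesis
    using card_Collect_split[OF finite_spt_pairs[OF assms],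
        where P = "\<lambda>p. P (card (snd p))" and Q = "\<lambda>p. fst p + 1 \<in> snd p"]
    by simp
qed

theorem lemma3:
  fixes k t :: nat
  assumes "1 \<le> k" and "1 \<le> t"
  shows "B0 k (2 * int t - 1) + B1 (k + 1) (2 * int t)
       = B0 k (2 * int t - 2 * int k - 1) + pde (2 * int t - int k - 1)"
proof -
  have k: "0 < k" "0 < k + 1" using assms(1) by simp_all
  let ?A = "\<lambda>S. {p \<in> spt_pairs k (2 * int t - 1). S (fst p) \<and> even (card (snd p))}"
  let ?B = "\<lambda>S. {p \<in> spt_pairs (k + 1) (2 * int t). S (fst p) \<and> odd (card (snd p))}"
  have "B0 k (2 * int t - 1) = card (?A (\<lambda>s. s = 1)) + card (?A (\<lambda>s. 2 < s))"
    using card_spt_pairs_without_smallest_two[OF k(1), where n = "2 * int t - 1" and P = even]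
    by (simp add: B0_eq_card_spt_pairs[OF k(1)])
  moreover have "B1 (k + 1) (2 * int t) = card (?B (\<lambda>s. s = 1)) + card (?B (\<lambda>s. 2 < s))"
    using card_spt_pairs_without_smallest_two[OF k(2), where n = "2 * int t" and P = odd]
    by (simp add: B1_eq_card_spt_pairs)
  moreover have "card (?A (\<lambda>s. s = 1)) + card (?B (\<lambda>s. s = 1)) = pde (2 * int t - int k - 1)"
    using pde_eq_card_spt_pairs_smallest_one[of k "2 * int t - 1"] by (simp add: algebra_simps)
  moreover have "B0 k (2 * int t - 2 * int k - 1) = card (?A (\<lambda>s. 2 < s)) + card (?B (\<lambda>s. 2 < s))"
    using card_spt_pairs_shift[OF k(1), where n = "2 * int t - 2 * int k - 1" and P = even]
    by (simp add: B0_eq_card_spt_pairs[OF k(1)])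
  ultimately show ?thesis by simp
qed

end
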